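(* Let $X$ be a regular Hausdorff locally countably compact topological space. (1) If $X$ is symmetrizable, then $X\times Y$ is symmetrizable for every symmetrizable topological space $Y$. (2) If $X$ has a weak base $(\mathcal{B}_x)_{x\in X}$ with every $\mathcal{B}_x$ countable (countable $\mathrm{S}_0$-character), then $X\times Y$ has countable $\mathrm{S}_0$-character for every topological space $Y$ of countable $\mathrm{S}_0$-character.
   Context: Products are with the product topology. Locally countably compact: every point has a neighborhood $K$ that is countably compact (every countably based filter whose members all meet $K$ has a refining ultrafilter converging to a point of $K$). A semi-metric on a set $Z$ is $d:Z\times Z\to[0,\infty)$ symmetric with $d(x,y)=0\iff x=y$, with balls $B(x,\epsilon)=\{y:d(x,y)<\epsilon\}$; a topological space $Z$ is symmetrizable if for some semi-metric $d$, $O\subset Z$ is open iff for every $x\in O$ there is $\epsilon>0$ with $B(x,\epsilon)\subset O$. A weak base of a topological space $Z$ is a family $(\mathcal{B}_x)_{x\in Z}$ where each $\mathcal{B}_x$ is a filter-base with $x\in\bigcap\mathcal{B}_x$ such that $U$ is open iff for every $x\in U$ there is $V\in\mathcal{B}_x$ with $V\subset U$; $Z$ has countable $\mathrm{S}_0$-character (weakly first-countable) if it has a weak base with each $\mathcal{B}_x$ countable. *)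

theory Defs
  imports "HOL-Analysis.Analysis"
begin

definition is_ultrafilter :: "'a filter \<Rightarrow> bool" where
  "is_ultrafilter U \<longleftrightarrow> U \<noteq> bot \<and> (\<forall>G. G \<noteq> bot \<and> G \<le> U \<longrightarrow> G = U)"

definition countably_based_filter :: "'a filter \<Rightarrow> bool" where
  "countably_based_filter F \<longleftrightarrow> (\<exists>B :: nat \<Rightarrow> 'a set. F = (INF n. principal (B n)))"

text \<open>Countable compactness of a subset K of a topological space, in the filter form of the paper.
  Note: in Isabelle's order, U \<le> F means U is finer than (refines) F.\<close>
definition countably_compact_in :: "'a topology \<Rightarrow> 'a set \<Rightarrow> bool" where
  "countably_compact_in X K \<longleftrightarrow> K \<subseteq> topspace X \<and>
     (\<forall>F. countably_based_filter F \<and> (\<forall>P. eventually P F \<longrightarrow> (\<exists>x\<in>K. P x)) \<longrightarrow>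
        (\<exists>U x. is_ultrafilter U \<and> U \<le> F \<and> x \<in> K \<and> limitin X id x U))"

definition locally_countably_compact :: "'a topology \<Rightarrow> bool" where
  "locally_countably_compact X \<longleftrightarrow>
     (\<forall>x\<in>topspace X. \<exists>K. countably_compact_in X K \<and>
        (\<exists>V. openin X V \<and> x \<in> V \<and> V \<subseteq> K))"

definition semimetric_on :: "'a set \<Rightarrow> ('a \<Rightarrow> 'a \<Rightarrow> real) \<Rightarrow> bool" where
  "semimetric_on Z d \<longleftrightarrow> (\<forall>x\<in>Z. \<forall>y\<in>Z. d x y \<ge> 0 \<and> d x y = d y x \<and> (d x y = 0 \<longleftrightarrow> x = y))"

definition symmetrizable :: "'a topology \<Rightarrow> bool" where
  "symmetrizable X \<longleftrightarrow> (\<exists>d. semimetric_on (topspace X) d \<and>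
     (\<forall>W. W \<subseteq> topspace X \<longrightarrow>
        (openin X W \<longleftrightarrow> (\<forall>x\<in>W. \<exists>e>0. {y \<in> topspace X. d x y < e} \<subseteq> W))))"

definition weak_base :: "'a topology \<Rightarrow> ('a \<Rightarrow> 'a set set) \<Rightarrow> bool" where
  "weak_base X B \<longleftrightarrow>
     (\<forall>x\<in>topspace X. B x \<noteq> {} \<and> (\<forall>V\<in>B x. V \<subseteq> topspace X \<and> x \<in> V) \<and>
        (\<forall>V1\<in>B x. \<forall>V2\<in>B x. \<exists>V3\<in>B x. V3 \<subseteq> V1 \<inter> V2)) \<and>
     (\<forall>U. U \<subseteq> topspace X \<longrightarrow> (openin X U \<longleftrightarrow> (\<forall>x\<in>U. \<exists>V\<in>B x. V \<subseteq> U)))"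

definition countable_S0_character :: "'a topology \<Rightarrow> bool" where
  "countable_S0_character X \<longleftrightarrow> (\<exists>B. weak_base X B \<and> (\<forall>x\<in>topspace X. countable (B x)))"

end

theory Submission
  imports Defs
begin

text \<open>Both properties say that the space has a weak base \<open>B x n\<close> indexed by \<open>\<nat>\<close> and decreasing
  in \<open>n\<close>: for countable \<open>S\<^sub>0\<close>-character by diagonalising the countable directed families, for a
  semimetric by the balls of radius \<open>1/(n+1)\<close>. For such bases \<open>B\<close> of \<open>X\<close> and \<open>C\<close> of \<open>Y\<close>, the
  boxes \<open>B x n \<times> C y n\<close> form one of \<open>X \<times> Y\<close> (for semimetrics, the balls of the maximum of the two).
  The point is that a set \<open>W\<close> containing such a box at each of its points is open, although the
  boxes need not be neighbourhoods. Given \<open>(x\<^sub>0, y\<^sub>0) \<in> W\<close>, regularity and local countable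
  compactness give a closed neighbourhood \<open>F\<close> of \<open>x\<^sub>0\<close> inside a countably compact set with
  \<open>F \<times> {y\<^sub>0} \<subseteq> W\<close>, and the tube \<open>T = {y. F \<times> {y} \<subseteq> W}\<close> is open: if no \<open>C y n\<close> with
  \<open>y \<in> T\<close> lay in \<open>T\<close>, there would be \<open>(x\<^sub>n, y\<^sub>n) \<notin> W\<close> with \<open>x\<^sub>n \<in> F\<close>, \<open>y\<^sub>n \<in> C y n\<close>,
  and the increasing open sets \<open>H\<^sub>m = {x. (x, y) \<in> W \<and> (\<forall>n\<ge>m. (x, y\<^sub>n) \<in> W)}\<close> would cover
  \<open>F\<close>, so by countable compactness one of them would contain \<open>F\<close> and hence \<open>x\<^sub>m\<close>.\<close>

lemma countably_compact_in_incseq_open_cover: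
  assumes K: "countably_compact_in X K"
    and open_H: "\<And>m. openin X (H m)" and "incseq H" and cover: "K \<subseteq> (\<Union>m. H m)"
  obtains m where "K \<subseteq> H m"
proof (rule ccontr)
  assume "\<not> thesis"
  with that have escape: "\<exists>z\<in>K. z \<notin> H m" for m by blast
  define F where "F = (INF m. principal (K - H m))"
  have directed: "\<exists>c\<in>UNIV. principal (K - H c) \<le> inf (principal (K - H a)) (principal (K - H b))"
    for a b :: nat
    using incseqD[OF \<open>incseq H\<close>, of a "max a b"] incseqD[OF \<open>incseq H\<close>, of b "max a b"]
    by (intro bexI[of _ "max a b"]) auto
  have eventually_F: "eventually P F \<longleftrightarrow> (\<exists>m. \<forall>x\<in>K - H m. P x)" for P
    unfolding F_def by (subst eventually_INF_base[OF _ directed]) (auto simp: eventually_principal)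
  have "countably_based_filter F"
    unfolding F_def countably_based_filter_def by (intro exI[of _ "\<lambda>m. K - H m"] refl)
  moreover have "\<forall>P. eventually P F \<longrightarrow> (\<exists>x\<in>K. P x)"
    unfolding eventually_F using escape by blast
  ultimately obtain U x where U: "is_ultrafilter U" "U \<le> F" and "x \<in> K" "limitin X id x U"
    using K unfolding countably_compact_in_def by blast
  then obtain m where "x \<in> H m" using cover by blast
  then have "eventually (\<lambda>z. z \<in> H m) U"
    using \<open>limitin X id x U\<close> open_H unfolding limitin_def by simp
  moreover have "eventually (\<lambda>z. z \<in> K - H m) U"
    using U(2) by (rule filter_leD) (auto simp: eventually_F)
  ultimately have "eventually (\<lambda>z. False) U"
    by (rule eventually_elim2) blast
  with U(1) show False unfolding is_ultrafilter_def by (simp add: eventually_False)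
qed

lemma countably_compact_in_closed_subset_incseq_open_cover:
  assumes K: "countably_compact_in X K" and "closedin X F" "F \<subseteq> K"
    and open_H: "\<And>m. openin X (H m)" and "incseq H" and cover: "F \<subseteq> (\<Union>m. H m)"
  obtains m where "F \<subseteq> H m"
proof -
  have "K \<subseteq> topspace X" using K unfolding countably_compact_in_def by blast
  moreover obtain m where "K \<subseteq> H m \<union> (topspace X - F)"
  proof (rule countably_compact_in_incseq_open_cover[OF K])
    show "openin X (H m \<union> (topspace X - F))" for m
      using open_H \<open>closedin X F\<close> by blast
    show "incseq (\<lambda>m. H m \<union> (topspace X - F))"
      using \<open>incseq H\<close> unfolding incseq_def by blast
  qed (use cover \<open>K \<subseteq> topspace X\<close> in blast)
  ultimately show thesis using that \<open>F \<subseteq> K\<close> by blast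
qed

definition seq_weak_base :: "'a topology \<Rightarrow> ('a \<Rightarrow> nat \<Rightarrow> 'a set) \<Rightarrow> bool" where
  "seq_weak_base X B \<longleftrightarrow>
     (\<forall>x\<in>topspace X. (\<forall>n. x \<in> B x n \<and> B x n \<subseteq> topspace X) \<and> decseq (B x)) \<and>
     (\<forall>U. U \<subseteq> topspace X \<longrightarrow> (openin X U \<longleftrightarrow> (\<forall>x\<in>U. \<exists>n. B x n \<subseteq> U)))"

lemma seq_weak_baseD:
  assumes "seq_weak_base X B" "x \<in> topspace X"
  shows "x \<in> B x n" "B x n \<subseteq> topspace X" "m \<le> n \<Longrightarrow> B x n \<subseteq> B x m"
  using assms unfolding seq_weak_base_def by (blast, blast, metis decseqD)

lemma seq_weak_base_openin_iff:
  "seq_weak_base X B \<Longrightarrow> U \<subseteq> topspace X \<Longrightarrow> openin X U \<longleftrightarrow> (\<forall>x\<in>U. \<exists>n. B x n \<subseteq> U)"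
  unfolding seq_weak_base_def by blast

lemma seq_weak_base_openinE:
  assumes B: "seq_weak_base X B" and "openin X U" "x \<in> U"
  obtains N where "\<And>n. N \<le> n \<Longrightarrow> B x n \<subseteq> U"
proof -
  obtain N where "B x N \<subseteq> U"
    using assms seq_weak_base_openin_iff[OF B openin_subset] by blast
  moreover have "x \<in> topspace X" using assms openin_subset by blast
  ultimately show thesis using that seq_weak_baseD(3)[OF B] by blast
qed

lemma countable_directed_family_decseq:
  assumes "\<A> \<noteq> {}" "countable \<A>" and directed: "\<And>V W. V \<in> \<A> \<Longrightarrow> W \<in> \<A> \<Longrightarrow> \<exists>U\<in>\<A>. U \<subseteq> V \<inter> W"
  shows "\<exists>s. range s \<subseteq> \<A> \<and> decseq s \<and> (\<forall>V\<in>\<A>. \<exists>n. s n \<subseteq> V)"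
proof -
  define f where "f = from_nat_into \<A>"
  have f: "f n \<in> \<A>" for n unfolding f_def using \<open>\<A> \<noteq> {}\<close> by (rule from_nat_into)
  obtain g where g: "\<And>V W. V \<in> \<A> \<Longrightarrow> W \<in> \<A> \<Longrightarrow> g V W \<in> \<A> \<and> g V W \<subseteq> V \<inter> W"
    using directed by metis
  define s where "s = rec_nat (f 0) (\<lambda>n S. g S (f (Suc n)))"
  have s: "s n \<in> \<A> \<and> s n \<subseteq> f n" for n
    by (induction n) (use f g in \<open>auto simp: s_def\<close>)
  have "s (Suc n) \<subseteq> s n" for n
    using g[OF conjunct1[OF s] f] by (simp add: s_def)
  then have "decseq s" by (rule decseq_SucI)
  moreover have "\<exists>n. s n \<subseteq> V" if "V \<in> \<A>" for V
    using from_nat_into_surj[OF \<open>countable \<A>\<close> that] s unfolding f_def by metis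
  ultimately show ?thesis using s by blast
qed

lemma weak_base_countable_imp_seq_weak_base:
  assumes \<B>: "weak_base X \<B>" and countable: "\<And>x. x \<in> topspace X \<Longrightarrow> countable (\<B> x)"
  obtains B where "seq_weak_base X B"
proof -
  have "\<exists>s. range s \<subseteq> \<B> x \<and> decseq s \<and> (\<forall>V\<in>\<B> x. \<exists>n. s n \<subseteq> V)"
    if "x \<in> topspace X" for x
  proof (rule countable_directed_family_decseq)
    show "\<B> x \<noteq> {}" "\<And>V W. V \<in> \<B> x \<Longrightarrow> W \<in> \<B> x \<Longrightarrow> \<exists>U\<in>\<B> x. U \<subseteq> V \<inter> W"
      using \<B> that unfolding weak_base_def by blast+
  qed (use countable that in blast)
  then obtain B where B: "\<And>x. x \<in> topspace X \<Longrightarrow>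
      range (B x) \<subseteq> \<B> x \<and> decseq (B x) \<and> (\<forall>V\<in>\<B> x. \<exists>n. B x n \<subseteq> V)"
    by metis
  have "(\<exists>V\<in>\<B> x. V \<subseteq> U) \<longleftrightarrow> (\<exists>n. B x n \<subseteq> U)" if "x \<in> topspace X" for x U
    using B[OF that] by (meson order_trans range_subsetD)
  then have "openin X U \<longleftrightarrow> (\<forall>x\<in>U. \<exists>n. B x n \<subseteq> U)" if "U \<subseteq> topspace X" for U
    using \<B> that unfolding weak_base_def by (metis subsetD)
  moreover have "x \<in> B x n \<and> B x n \<subseteq> topspace X" if "x \<in> topspace X" for x n
  proof -
    have "B x n \<in> \<B> x" using B[OF that] by blast
    then show ?thesis using \<B> that unfolding weak_base_def by blast
  qed
  ultimately have "seq_weak_base X B"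
    using B unfolding seq_weak_base_def by simp
  then show thesis by (rule that)
qed

lemma seq_weak_base_imp_weak_base_range:
  assumes B: "seq_weak_base X B"
  shows "weak_base X (\<lambda>x. range (B x))"
  unfolding weak_base_def
proof (intro conjI ballI allI impI)
  fix x assume x: "x \<in> topspace X"
  show "range (B x) \<noteq> {}" by simp
  show "V \<subseteq> topspace X" "x \<in> V" if "V \<in> range (B x)" for V
    using that seq_weak_baseD(1,2)[OF B x] by blast+
  fix V1 V2 assume "V1 \<in> range (B x)" "V2 \<in> range (B x)"
  then obtain m n where "V1 = B x m" "V2 = B x n" by blast
  then have "B x (max m n) \<subseteq> V1 \<inter> V2"
    using seq_weak_baseD(3)[OF B x] by simp
  then show "\<exists>V3\<in>range (B x). V3 \<subseteq> V1 \<inter> V2" by blast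
qed (simp add: seq_weak_base_openin_iff[OF B])

lemma countable_S0_character_iff_seq_weak_base:
  "countable_S0_character X \<longleftrightarrow> (\<exists>B. seq_weak_base X B)"
  unfolding countable_S0_character_def
  by (metis weak_base_countable_imp_seq_weak_base seq_weak_base_imp_weak_base_range
      countable_image countableI_type)

definition semiball :: "'a topology \<Rightarrow> ('a \<Rightarrow> 'a \<Rightarrow> real) \<Rightarrow> 'a \<Rightarrow> real \<Rightarrow> 'a set" where
  "semiball X d x e = {y \<in> topspace X. d x y < e}"

lemma semiball_mono: "e \<le> e' \<Longrightarrow> semiball X d x e \<subseteq> semiball X d x e'"
  unfolding semiball_def by auto

lemma ex_semiball_subset_iff_ex_inverse_Suc:
  "(\<exists>e>0. semiball X d x e \<subseteq> U) \<longleftrightarrow> (\<exists>n. semiball X d x (1 / Suc n) \<subseteq> U)"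
proof
  assume "\<exists>e>0. semiball X d x e \<subseteq> U"
  then obtain e n where "semiball X d x e \<subseteq> U" "inverse (Suc n) < e"
    using reals_Archimedean by blast
  moreover have "1 / real (Suc n) \<le> e"
    using \<open>inverse (Suc n) < e\<close> by (simp add: inverse_eq_divide)
  ultimately have "semiball X d x (1 / Suc n) \<subseteq> U"
    by (meson semiball_mono order_trans)
  then show "\<exists>n. semiball X d x (1 / Suc n) \<subseteq> U" ..
next
  assume "\<exists>n. semiball X d x (1 / Suc n) \<subseteq> U"
  moreover have "1 / real (Suc n) > 0" for n by simp
  ultimately show "\<exists>e>0. semiball X d x e \<subseteq> U" by blast
qed

lemma symmetrizable_iff_seq_weak_base_semiballs:
  "symmetrizable X \<longleftrightarrow>
     (\<exists>d. semimetric_on (topspace X) d \<and> seq_weak_base X (\<lambda>x n. semiball X d x (1 / Suc n)))"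
proof -
  have "seq_weak_base X (\<lambda>x n. semiball X d x (1 / Suc n)) \<longleftrightarrow>
          (\<forall>W. W \<subseteq> topspace X \<longrightarrow> (openin X W \<longleftrightarrow> (\<forall>x\<in>W. \<exists>e>0. semiball X d x e \<subseteq> W)))"
    if "semimetric_on (topspace X) d" for d
  proof -
    have "decseq (\<lambda>n. semiball X d x (1 / Suc n))" for x
      by (rule decseq_SucI, rule semiball_mono) (simp add: frac_le)
    moreover have "x \<in> semiball X d x e" if "x \<in> topspace X" "e > 0" for x e
    proof -
      have "d x x = 0"
        using \<open>semimetric_on (topspace X) d\<close> that(1) unfolding semimetric_on_def by blast
      then show ?thesis using that unfolding semiball_def by simp
    qed
    ultimately show ?thesis
      unfolding seq_weak_base_def ex_semiball_subset_iff_ex_inverse_Suc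
      by (auto simp: semiball_def)
  qed
  then show ?thesis unfolding symmetrizable_def semiball_def[symmetric] by auto
qed

lemma max_nonneg_eq_0_iff: "0 \<le> (u::real) \<Longrightarrow> 0 \<le> v \<Longrightarrow> max u v = 0 \<longleftrightarrow> u = 0 \<and> v = 0"
  by (auto simp: max_def)

lemma semimetric_on_prod_max:
  assumes "semimetric_on A d" "semimetric_on B d'"
  shows "semimetric_on (A \<times> B) (\<lambda>p q. max (d (fst p) (fst q)) (d' (snd p) (snd q)))"
  unfolding semimetric_on_def
proof (intro ballI)
  fix p q assume "p \<in> A \<times> B" "q \<in> A \<times> B"
  then have "fst p \<in> A" "fst q \<in> A" "snd p \<in> B" "snd q \<in> B" by auto
  then have "d (fst p) (fst q) \<ge> 0" "d (fst p) (fst q) = d (fst q) (fst p)" "d (fst p) (fst q) = 0 \<longleftrightarrow> fst p = fst q"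
    and "d' (snd p) (snd q) \<ge> 0" "d' (snd p) (snd q) = d' (snd q) (snd p)" "d' (snd p) (snd q) = 0 \<longleftrightarrow> snd p = snd q"
    using assms unfolding semimetric_on_def by simp_all
  then show "0 \<le> max (d (fst p) (fst q)) (d' (snd p) (snd q)) \<and>
      max (d (fst p) (fst q)) (d' (snd p) (snd q)) = max (d (fst q) (fst p)) (d' (snd q) (snd p)) \<and>
      (max (d (fst p) (fst q)) (d' (snd p) (snd q)) = 0) = (p = q)"
    by (simp add: max_nonneg_eq_0_iff prod_eq_iff)
qed

lemma semiball_prod_topology_max:
  "semiball (prod_topology X Y) (\<lambda>p q. max (d (fst p) (fst q)) (d' (snd p) (snd q))) p e
     = semiball X d (fst p) e \<times> semiball Y d' (snd p) e"
  unfolding semiball_def by auto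

context
  fixes X :: "'a topology" and Y :: "'b topology"
    and B :: "'a \<Rightarrow> nat \<Rightarrow> 'a set" and C :: "'b \<Rightarrow> nat \<Rightarrow> 'b set" and W :: "('a \<times> 'b) set"
  assumes B: "seq_weak_base X B" and C: "seq_weak_base Y C"
    and W_sub: "W \<subseteq> topspace X \<times> topspace Y"
    and W_box: "\<And>x y. (x, y) \<in> W \<Longrightarrow> \<exists>n. B x n \<times> C y n \<subseteq> W"
begin

lemma box_open_eventually_box:
  assumes "(x, y) \<in> W"
  obtains k where "\<And>n. k \<le> n \<Longrightarrow> B x n \<times> C y n \<subseteq> W"
proof -
  obtain k where "B x k \<times> C y k \<subseteq> W" using W_box assms by blast
  moreover have "x \<in> topspace X" "y \<in> topspace Y" using W_sub assms by auto
  ultimately show thesis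
    using that seq_weak_baseD(3)[OF B] seq_weak_baseD(3)[OF C] by (meson Sigma_mono order_trans)
qed

lemma box_open_section_openin:
  assumes "y \<in> topspace Y"
  shows "openin X {x \<in> topspace X. (x, y) \<in> W}"
  unfolding seq_weak_base_openin_iff[OF B Collect_restrict]
proof
  fix x assume "x \<in> {x \<in> topspace X. (x, y) \<in> W}"
  then obtain n where "B x n \<times> C y n \<subseteq> W" "x \<in> topspace X" using W_box by blast
  then show "\<exists>n. B x n \<subseteq> {x \<in> topspace X. (x, y) \<in> W}"
    using seq_weak_baseD(1)[OF C assms] seq_weak_baseD(2)[OF B] by blast
qed

lemma box_open_tail_section_openin:
  assumes y: "y \<in> topspace Y" and ys: "\<And>n. ys n \<in> C y n"
  shows "openin X {x \<in> topspace X. (x, y) \<in> W \<and> (\<forall>n\<ge>m. (x, ys n) \<in> W)}"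
    (is "openin X ?H")
  unfolding seq_weak_base_openin_iff[OF B Collect_restrict]
proof
  fix x assume "x \<in> ?H"
  then have x: "x \<in> topspace X" and "(x, y) \<in> W" and tail: "\<forall>n\<ge>m. (x, ys n) \<in> W" by auto
  then obtain k where k: "B x k \<times> C y k \<subseteq> W" using W_box by blast
  \<comment> \<open>the box at \<open>(x, y)\<close> takes care of all \<open>n \<ge> k\<close>; the finitely many others need \<open>N\<close>\<close>
  define N where "N = (\<Inter>n\<in>{m..<k}. {x \<in> topspace X. (x, ys n) \<in> W}) \<inter> topspace X"
  have ys_top: "ys n \<in> topspace Y" for n using ys seq_weak_baseD(2)[OF C y] by blast
  have "openin X N"
    unfolding N_def by (intro openin_INT finite_atLeastLessThan box_open_section_openin ys_top)
  moreover have "x \<in> N" using x tail by (auto simp: N_def)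
  ultimately obtain j where j: "B x (max k j) \<subseteq> N"
    using seq_weak_base_openinE[OF B] by (metis max.cobounded2)
  have "B x (max k j) \<subseteq> ?H"
  proof
    fix z assume z: "z \<in> B x (max k j)"
    then have "z \<in> B x k" "z \<in> N"
      using j seq_weak_baseD(3)[OF B x, of k "max k j"] by auto
    have "(z, ys n) \<in> W" if "m \<le> n" for n
    proof (cases "n < k")
      case True
      with \<open>z \<in> N\<close> that show ?thesis by (simp add: N_def)
    next
      case False
      then have "ys n \<in> C y k" using ys seq_weak_baseD(3)[OF C y] by (meson not_le subsetD)
      with \<open>z \<in> B x k\<close> k show ?thesis by blast
    qed
    moreover have "(z, y) \<in> W" using \<open>z \<in> B x k\<close> k seq_weak_baseD(1)[OF C y] by blast
    ultimately show "z \<in> ?H" using \<open>z \<in> N\<close> by (simp add: N_def)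
  qed
  then show "\<exists>n. B x n \<subseteq> ?H" ..
qed

lemma box_open_tube_openin:
  assumes K: "countably_compact_in X K" and F: "closedin X F" "F \<subseteq> K"
  shows "openin Y {y \<in> topspace Y. \<forall>x\<in>F. (x, y) \<in> W}" (is "openin Y ?T")
  unfolding seq_weak_base_openin_iff[OF C Collect_restrict]
proof
  fix y assume "y \<in> ?T"
  then have y: "y \<in> topspace Y" and F_y: "\<forall>x\<in>F. (x, y) \<in> W" by auto
  show "\<exists>n. C y n \<subseteq> ?T"
  proof (rule ccontr)
    assume "\<nexists>n. C y n \<subseteq> ?T"
    then have "\<forall>n. \<exists>y'\<in>C y n. \<exists>x\<in>F. (x, y') \<notin> W"
      using seq_weak_baseD(2)[OF C y] by blast
    then obtain ys xs where ys: "\<And>n. ys n \<in> C y n" and xs: "\<And>n. xs n \<in> F"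
      and escape: "\<And>n. (xs n, ys n) \<notin> W"
      by metis
    define H where "H m = {x \<in> topspace X. (x, y) \<in> W \<and> (\<forall>n\<ge>m. (x, ys n) \<in> W)}" for m
    have "openin X (H m)" for m
      unfolding H_def using y ys by (rule box_open_tail_section_openin)
    moreover have "incseq H" by (auto simp: incseq_def H_def)
    moreover have "F \<subseteq> (\<Union>m. H m)"
    proof
      fix x assume "x \<in> F"
      then have xy: "(x, y) \<in> W" using F_y by blast
      then obtain k where k: "\<And>n. k \<le> n \<Longrightarrow> B x n \<times> C y n \<subseteq> W"
        using box_open_eventually_box by blast
      have x: "x \<in> topspace X" using xy W_sub by auto
      have "(x, ys n) \<in> W" if "k \<le> n" for n
        using k[OF that] ys seq_weak_baseD(1)[OF B x] by blast
      then have "x \<in> H k" using x xy by (simp add: H_def)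
      then show "x \<in> (\<Union>m. H m)" by blast
    qed
    ultimately obtain m where "F \<subseteq> H m"
      by (rule countably_compact_in_closed_subset_incseq_open_cover[OF K F])
    then show False using xs escape by (auto simp: H_def)
  qed
qed

lemma box_open_openin_prod_topology:
  assumes "regular_space X" "locally_countably_compact X"
  shows "openin (prod_topology X Y) W"
  unfolding openin_subopen[of _ W]
proof
  fix p assume "p \<in> W"
  then obtain x0 y0 where p: "p = (x0, y0)" "(x0, y0) \<in> W" by (metis surj_pair)
  then have x0: "x0 \<in> topspace X" and y0: "y0 \<in> topspace Y" using W_sub by auto
  obtain K V0 where K: "countably_compact_in X K" "openin X V0" "x0 \<in> V0" "V0 \<subseteq> K"
    using assms(2) x0 unfolding locally_countably_compact_def by blast
  have "openin X (V0 \<inter> {x \<in> topspace X. (x, y0) \<in> W})"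
    using K(2) box_open_section_openin[OF y0] by blast
  moreover have "x0 \<in> V0 \<inter> {x \<in> topspace X. (x, y0) \<in> W}" using K(3) p(2) x0 by blast
  ultimately obtain U F where UF: "openin X U" "closedin X F" "x0 \<in> U" "U \<subseteq> F"
    and F_sub: "F \<subseteq> V0 \<inter> {x \<in> topspace X. (x, y0) \<in> W}"
    using assms(1) unfolding neighbourhood_base_of_closedin[symmetric] neighbourhood_base_of
    by meson
  let ?T = "{y \<in> topspace Y. \<forall>x\<in>F. (x, y) \<in> W}"
  have "openin Y ?T"
    using K(1) UF(2) F_sub K(4) by (intro box_open_tube_openin) auto
  moreover have "y0 \<in> ?T" "U \<times> ?T \<subseteq> W" using y0 F_sub UF(4) by auto
  ultimately show "\<exists>T. openin (prod_topology X Y) T \<and> p \<in> T \<and> T \<subseteq> W"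
    using UF(1,3) p(1) by (intro exI[of _ "U \<times> ?T"]) (auto simp: openin_prod_Times_iff)
qed

end

lemma seq_weak_base_prod_topology:
  assumes "regular_space X" "locally_countably_compact X"
    and B: "seq_weak_base X B" and C: "seq_weak_base Y C"
  shows "seq_weak_base (prod_topology X Y) (\<lambda>p n. B (fst p) n \<times> C (snd p) n)"
  unfolding seq_weak_base_def topspace_prod_topology
proof (intro conjI ballI allI impI)
  fix p assume "p \<in> topspace X \<times> topspace Y"
  then have x: "fst p \<in> topspace X" and y: "snd p \<in> topspace Y" by auto
  show "p \<in> B (fst p) n \<times> C (snd p) n" "B (fst p) n \<times> C (snd p) n \<subseteq> topspace X \<times> topspace Y" for n
    using seq_weak_baseD(1,2)[OF B x] seq_weak_baseD(1,2)[OF C y]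
    by (simp add: mem_Times_iff, meson Sigma_mono)
  show "decseq (\<lambda>n. B (fst p) n \<times> C (snd p) n)"
  proof (intro decseq_SucI Sigma_mono)
    show "B (fst p) (Suc n) \<subseteq> B (fst p) n" "C (snd p) (Suc n) \<subseteq> C (snd p) n" for n
      using seq_weak_baseD(3)[OF B x] seq_weak_baseD(3)[OF C y] by simp_all
  qed
next
  fix W assume W: "W \<subseteq> topspace X \<times> topspace Y"
  show "openin (prod_topology X Y) W \<longleftrightarrow> (\<forall>p\<in>W. \<exists>n. B (fst p) n \<times> C (snd p) n \<subseteq> W)"
  proof
    assume "openin (prod_topology X Y) W"
    show "\<forall>p\<in>W. \<exists>n. B (fst p) n \<times> C (snd p) n \<subseteq> W"
    proof
      fix p assume "p \<in> W"
      then obtain U V where "openin X U" "openin Y V" "fst p \<in> U" "snd p \<in> V" "U \<times> V \<subseteq> W"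
        using \<open>openin (prod_topology X Y) W\<close> unfolding openin_prod_topology_alt
        by (metis prod.collapse)
      then obtain k l where "\<And>n. k \<le> n \<Longrightarrow> B (fst p) n \<subseteq> U" "\<And>n. l \<le> n \<Longrightarrow> C (snd p) n \<subseteq> V"
        by (metis seq_weak_base_openinE[OF B] seq_weak_base_openinE[OF C])
      then have "B (fst p) (max k l) \<times> C (snd p) (max k l) \<subseteq> W"
        using \<open>U \<times> V \<subseteq> W\<close> by (meson Sigma_mono max.cobounded1 max.cobounded2 order_trans)
      then show "\<exists>n. B (fst p) n \<times> C (snd p) n \<subseteq> W" ..
    qed
  next
    assume "\<forall>p\<in>W. \<exists>n. B (fst p) n \<times> C (snd p) n \<subseteq> W"
    then show "openin (prod_topology X Y) W"
      using box_open_openin_prod_topology[OF B C W] assms(1,2) by fastforce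
  qed
qed

theorem theorem6p1:
  fixes X :: "'a topology"
  assumes "regular_space X" and "Hausdorff_space X" and "locally_countably_compact X"
  shows "(symmetrizable X \<longrightarrow>
            (\<forall>Y :: 'b topology. symmetrizable Y \<longrightarrow> symmetrizable (prod_topology X Y)))
       \<and> (countable_S0_character X \<longrightarrow>
            (\<forall>Y :: 'c topology. countable_S0_character Y \<longrightarrow> countable_S0_character (prod_topology X Y)))"
proof (intro conjI impI allI)
  fix Y :: "'b topology"
  assume "symmetrizable X" "symmetrizable Y"
  then obtain d d' where d: "semimetric_on (topspace X) d" "seq_weak_base X (\<lambda>x n. semiball X d x (1 / Suc n))"
    and d': "semimetric_on (topspace Y) d'" "seq_weak_base Y (\<lambda>y n. semiball Y d' y (1 / Suc n))"
    unfolding symmetrizable_iff_seq_weak_base_semiballs by blast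
  let ?d = "\<lambda>p q. max (d (fst p) (fst q)) (d' (snd p) (snd q))"
  have "seq_weak_base (prod_topology X Y) (\<lambda>p n. semiball (prod_topology X Y) ?d p (1 / Suc n))"
    unfolding semiball_prod_topology_max
    using seq_weak_base_prod_topology[OF assms(1,3) d(2) d'(2)] .
  moreover have "semimetric_on (topspace (prod_topology X Y)) ?d"
    unfolding topspace_prod_topology using d(1) d'(1) by (rule semimetric_on_prod_max)
  ultimately show "symmetrizable (prod_topology X Y)"
    unfolding symmetrizable_iff_seq_weak_base_semiballs by blast
next
  fix Y :: "'c topology"
  assume "countable_S0_character X" "countable_S0_character Y"
  then show "countable_S0_character (prod_topology X Y)"
    unfolding countable_S0_character_iff_seq_weak_base
    using seq_weak_base_prod_topology[OF assms(1,3)] by blast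
qed

end
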